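(* Let $r\in[0,1]$, $\theta\in[0,1]$, $K_+,K_-\in\mathbb N_0$. There exist a dataset space of finite sets, datasets $x\simeq_{K_+,K_-}x'$, and a function $h:\mathbb Y\to\{0,1\}$ such that the Poisson-subsampled (rate $r$) randomized response mechanism $M=B\circ S$, $B(y)=|h(y)-(1-V)|$ with $V\sim\mathrm{Bern}(\theta)$, satisfies $$\Psi_\alpha(m_x\|m_{x'})=\max_{\tau\in\{\theta,1-\theta\}}\Psi_\alpha\big((1-w^{(1)})\mathrm{Bern}(\cdot\mid\theta)+w^{(1)}\mathrm{Bern}(\cdot\mid\tau)\ \big\|\ (1-w^{(2)})\mathrm{Bern}(\cdot\mid\theta)+w^{(2)}\mathrm{Bern}(\cdot\mid1-\tau)\big),$$ where $w^{(1)}=1-(1-r)^{K_-}$ and $w^{(2)}=1-(1-r)^{K_+}$.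
   Context: Batches are subsets $y\subseteq x$; Poisson subsampling with rate $r$: $s_x(y)=r^{|y|}(1-r)^{|x|-|y|}$ for $y\subseteq x$; $m_x(z)=\sum_y b_y(z)s_x(y)$ with $b_y$ the pmf of $B(y)$ on $\{0,1\}$. $\mathrm{Bern}(\cdot\mid p)$ is the pmf on $\{0,1\}$ with mass $p$ at $1$. $x\simeq_{K_+,K_-}x'$ iff $x'=(x\setminus g_-)\cup g_+$ with $g_-\subseteq x$, $|g_-|=K_-$, $g_+\cap x=\emptyset$, $|g_+|=K_+$. On $\{0,1\}$: $H_\alpha(p\|q)=\sum_z\max\{p(z)-\alpha q(z),0\}$ ($\alpha\ge0$), $\Lambda_\alpha(p\|q)=\sum_z p(z)^\alpha q(z)^{1-\alpha}$ ($\alpha>1$); $\Psi_\alpha$ is either. *)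

theory Defs
  imports "HOL-Analysis.Analysis"
begin

text \<open>Outcomes of the mechanism live in {0,1} (as naturals). Datasets are finite sets of naturals.\<close>

definition bern :: "real \<Rightarrow> nat \<Rightarrow> real" where
  "bern p z = (if z = 1 then p else if z = 0 then 1 - p else 0)"

definition rr_pmf :: "real \<Rightarrow> nat \<Rightarrow> nat \<Rightarrow> real" where
  "rr_pmf \<theta> hv z = (\<Sum>v\<in>{0,1::nat}. bern \<theta> v * (if z = nat \<bar>int hv - (1 - int v)\<bar> then 1 else 0))"

definition poisson_sub :: "real \<Rightarrow> nat set \<Rightarrow> nat set \<Rightarrow> real" where
  "poisson_sub r x y = (if y \<subseteq> x then r ^ card y * (1 - r) ^ (card x - card y) else 0)"

definition mech_pmf :: "real \<Rightarrow> real \<Rightarrow> (nat set \<Rightarrow> nat) \<Rightarrow> nat set \<Rightarrow> nat \<Rightarrow> real" where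
  "mech_pmf r \<theta> h x z = (\<Sum>y\<in>Pow x. rr_pmf \<theta> (h y) z * poisson_sub r x y)"

definition neighbouring :: "nat \<Rightarrow> nat \<Rightarrow> nat set \<Rightarrow> nat set \<Rightarrow> bool" where
  "neighbouring Kp Km x x' \<longleftrightarrow> (\<exists>gm gp. gm \<subseteq> x \<and> card gm = Km \<and> finite gp \<and> gp \<inter> x = {}
      \<and> card gp = Kp \<and> x' = (x - gm) \<union> gp)"

definition hockey :: "real \<Rightarrow> (nat \<Rightarrow> real) \<Rightarrow> (nat \<Rightarrow> real) \<Rightarrow> real" where
  "hockey \<alpha> p q = (\<Sum>z\<in>{0,1::nat}. max (p z - \<alpha> * q z) 0)"

definition renyi_moment :: "real \<Rightarrow> (nat \<Rightarrow> real) \<Rightarrow> (nat \<Rightarrow> real) \<Rightarrow> ereal" where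
  "renyi_moment \<alpha> p q = (\<Sum>z\<in>{0,1::nat}.
      (if q z = 0 then (if p z = 0 then 0 else \<infinity>) else ereal (p z powr \<alpha> * q z powr (1 - \<alpha>))))"

definition mix :: "real \<Rightarrow> real \<Rightarrow> real \<Rightarrow> nat \<Rightarrow> real" where
  "mix w p q z = (1 - w) * bern p z + w * bern q z"

end

theory Submission imports Defs begin

(* Take x and x' disjoint, so that x' arises from x by removing all of its K_- elements and
   adding K_+ fresh ones, and let h be 1 on the empty batch, a fixed bit a on the nonempty
   subsets of x and 1 - a on every other batch. A Poisson batch of x is empty with probability
   (1 - r)^K_- and otherwise a nonempty subset of x, so m_x is exactly the mixture with weight
   w1 of Bern(theta) and the randomized response of a; likewise m_x' is the mixture with weight
   w2 of Bern(theta) and the randomized response of 1 - a. The two choices of a realise the two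
   values of tau, and whichever gives the larger divergence attains the maximum. *)

lemma sum_Pow_power_card:
  fixes p q :: "'a::comm_semiring_1"
  assumes "finite A"
  shows "(\<Sum>y\<in>Pow A. p ^ card y * q ^ (card A - card y)) = (p + q) ^ card A"
proof -
  have "(p + q) ^ card A = (\<Prod>_\<in>A. p + q)" by simp
  also have "\<dots> = (\<Sum>y\<in>Pow A. (\<Prod>_\<in>y. p) * (\<Prod>_\<in>A - y. q))"
    by (rule prod_add[OF assms])
  also have "\<dots> = (\<Sum>y\<in>Pow A. p ^ card y * q ^ (card A - card y))"
    by (rule sum.cong) (auto simp: card_Diff_subset finite_subset[OF _ assms])
  finally show ?thesis ..
qed

lemma sum_poisson_sub:
  assumes "finite x"
  shows "(\<Sum>y\<in>Pow x. poisson_sub r x y) = 1"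
  using sum_Pow_power_card[OF assms, of r "1 - r"] by (simp add: poisson_sub_def)

lemma poisson_sub_empty: "poisson_sub r x {} = (1 - r) ^ card x"
  by (simp add: poisson_sub_def)

lemma rr_pmf_1: "rr_pmf \<theta> 1 = bern \<theta>"
  by (auto simp: rr_pmf_def bern_def)

lemma rr_pmf_0: "rr_pmf \<theta> 0 = bern (1 - \<theta>)"
  by (auto simp: rr_pmf_def bern_def)

lemma mech_pmf_constant_on_nonempty:
  assumes "finite x" and "\<And>y. y \<subseteq> x \<Longrightarrow> y \<noteq> {} \<Longrightarrow> h y = a"
  shows "mech_pmf r \<theta> h x z =
           (1 - r) ^ card x * rr_pmf \<theta> (h {}) z + (1 - (1 - r) ^ card x) * rr_pmf \<theta> a z"
proof -
  have "(\<Sum>y\<in>Pow x - {{}}. poisson_sub r x y) = 1 - (1 - r) ^ card x"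
    using sum_poisson_sub[OF assms(1), of r] assms(1)
    by (subst (asm) sum.remove[of _ "{}"]) (auto simp: poisson_sub_empty)
  moreover have "(\<Sum>y\<in>Pow x - {{}}. rr_pmf \<theta> (h y) z * poisson_sub r x y)
                   = rr_pmf \<theta> a z * (\<Sum>y\<in>Pow x - {{}}. poisson_sub r x y)"
    unfolding sum_distrib_left by (rule sum.cong) (auto simp: assms(2))
  moreover have "mech_pmf r \<theta> h x z = rr_pmf \<theta> (h {}) z * poisson_sub r x {}
                   + (\<Sum>y\<in>Pow x - {{}}. rr_pmf \<theta> (h y) z * poisson_sub r x y)"
    unfolding mech_pmf_def using assms(1) by (subst sum.remove[of _ "{}"]) auto
  ultimately show ?thesis by (simp add: poisson_sub_empty)
qed

lemma neighbouring_pair_with_mixtures: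
  assumes "\<tau> = \<theta> \<or> \<tau> = 1 - \<theta>"
  shows "\<exists>x x' :: nat set. \<exists>h :: nat set \<Rightarrow> nat.
           finite x \<and> finite x' \<and> neighbouring Kp Km x x' \<and> (\<forall>y. h y \<in> {0, 1}) \<and>
           mech_pmf r \<theta> h x = mix (1 - (1 - r) ^ Km) \<theta> \<tau> \<and>
           mech_pmf r \<theta> h x' = mix (1 - (1 - r) ^ Kp) \<theta> (1 - \<tau>)"
proof -
  define a :: nat where "a = (if \<tau> = \<theta> then 1 else 0)"
  define a' :: nat where "a' = (if \<tau> = \<theta> then 0 else 1)"
  define x where "x = {0..<Km}"
  define x' where "x' = {Km..<Km + Kp}"
  define h where "h y = (if y = {} then 1 else if y \<subseteq> x then a else a')" for y
  have rr_a: "rr_pmf \<theta> a = bern \<tau>" and rr_a': "rr_pmf \<theta> a' = bern (1 - \<tau>)"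
    using assms by (auto simp: a_def a'_def rr_pmf_0 rr_pmf_1[unfolded One_nat_def])
  have rr_empty: "rr_pmf \<theta> (h {}) = bern \<theta>"
    unfolding h_def by (simp only: simp_thms if_True rr_pmf_1)
  have h_x: "h y = a" if "y \<subseteq> x" "y \<noteq> {}" for y
    using that by (simp add: h_def)
  have h_x': "h y = a'" if "y \<subseteq> x'" "y \<noteq> {}" for y
  proof -
    have "\<not> y \<subseteq> x" using that unfolding x_def x'_def by fastforce
    then show ?thesis using that by (simp add: h_def)
  qed
  have "neighbouring Kp Km x x'"
    unfolding neighbouring_def by (intro exI[of _ x] exI[of _ x']) (auto simp: x_def x'_def)
  moreover have "\<forall>y. h y \<in> {0, 1}"
    by (auto simp: h_def a_def a'_def)
  moreover have "mech_pmf r \<theta> h x = mix (1 - (1 - r) ^ Km) \<theta> \<tau>"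
    using mech_pmf_constant_on_nonempty[of x h a r \<theta>] h_x
    by (simp add: fun_eq_iff x_def mix_def rr_empty rr_a)
  moreover have "mech_pmf r \<theta> h x' = mix (1 - (1 - r) ^ Kp) \<theta> (1 - \<tau>)"
    using mech_pmf_constant_on_nonempty[of x' h a' r \<theta>] h_x'
    by (simp add: fun_eq_iff x'_def mix_def rr_empty rr_a')
  ultimately show ?thesis
    by (intro exI[of _ x] exI[of _ x'] exI[of _ h]) (auto simp: x_def x'_def)
qed

lemma neighbouring_pair_attaining_max:
  fixes D :: "(nat \<Rightarrow> real) \<Rightarrow> (nat \<Rightarrow> real) \<Rightarrow> 'b::linorder"
  shows "\<exists>x x' :: nat set. \<exists>h :: nat set \<Rightarrow> nat.
           finite x \<and> finite x' \<and> neighbouring Kp Km x x' \<and> (\<forall>y. h y \<in> {0, 1}) \<and>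
           D (mech_pmf r \<theta> h x) (mech_pmf r \<theta> h x') =
             max (D (mix (1 - (1 - r) ^ Km) \<theta> \<theta>) (mix (1 - (1 - r) ^ Kp) \<theta> (1 - \<theta>)))
                 (D (mix (1 - (1 - r) ^ Km) \<theta> (1 - \<theta>)) (mix (1 - (1 - r) ^ Kp) \<theta> (1 - (1 - \<theta>))))"
  using neighbouring_pair_with_mixtures[of \<theta> \<theta> Kp Km r]
        neighbouring_pair_with_mixtures[of "1 - \<theta>" \<theta> Kp Km r]
  by (cases "D (mix (1 - (1 - r) ^ Km) \<theta> (1 - \<theta>)) (mix (1 - (1 - r) ^ Kp) \<theta> (1 - (1 - \<theta>)))
             \<le> D (mix (1 - (1 - r) ^ Km) \<theta> \<theta>) (mix (1 - (1 - r) ^ Kp) \<theta> (1 - \<theta>))")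
     (metis max_def)+

theorem mainTheorem10:
  fixes r \<theta> :: real and Kp Km :: nat
  assumes "0 \<le> r" "r \<le> 1" "0 \<le> \<theta>" "\<theta> \<le> 1"
  defines "w1 \<equiv> 1 - (1 - r) ^ Km" and "w2 \<equiv> 1 - (1 - r) ^ Kp"
  shows "(\<forall>\<alpha>::real. \<alpha> \<ge> 0 \<longrightarrow>
            (\<exists>x x' :: nat set. \<exists>h :: nat set \<Rightarrow> nat.
               finite x \<and> finite x' \<and> neighbouring Kp Km x x' \<and> (\<forall>y. h y \<in> {0, 1}) \<and>
               hockey \<alpha> (mech_pmf r \<theta> h x) (mech_pmf r \<theta> h x') =
                 max (hockey \<alpha> (mix w1 \<theta> \<theta>) (mix w2 \<theta> (1 - \<theta>)))
                     (hockey \<alpha> (mix w1 \<theta> (1 - \<theta>)) (mix w2 \<theta> (1 - (1 - \<theta>))))))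
       \<and> (\<forall>\<alpha>::real. \<alpha> > 1 \<longrightarrow>
            (\<exists>x x' :: nat set. \<exists>h :: nat set \<Rightarrow> nat.
               finite x \<and> finite x' \<and> neighbouring Kp Km x x' \<and> (\<forall>y. h y \<in> {0, 1}) \<and>
               renyi_moment \<alpha> (mech_pmf r \<theta> h x) (mech_pmf r \<theta> h x') =
                 max (renyi_moment \<alpha> (mix w1 \<theta> \<theta>) (mix w2 \<theta> (1 - \<theta>)))
                     (renyi_moment \<alpha> (mix w1 \<theta> (1 - \<theta>)) (mix w2 \<theta> (1 - (1 - \<theta>))))))"
  unfolding w1_def w2_def by (intro conjI allI impI neighbouring_pair_attaining_max)

end
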